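(* Let $X$ be a finite set with $|X|\ge 3$, let $T\in B(X)$, and let $\mathcal T$ be a minimal triplet cover of $T$. Then $|\mathcal T|\le 3(|X|-2)$.
   Context: A binary phylogenetic $X$-tree is an unrooted tree whose leaf set is $X$ and all of whose non-leaf vertices are unlabelled of degree three; $B(X)$ is the set of such trees. Pairs in $\binom{X}{2}$ are written $ab$, triples $abc$. Given $\mathcal T\subseteq\binom{X}{2}$, a triple $abc$ supports an interior vertex $v$ if $a,b,c$ lie one in each of the three components of $T$ minus $v$ and $ab,ac,bc\in\mathcal T$; $\mathcal T$ is a triplet cover for $T$ if every interior vertex is supported by some triple. A triplet cover $\mathcal T$ is minimal if $\mathcal T-\{ab\}$ is not a triplet cover for $T$ for any $ab\in\mathcal T$. *)

theory Defs
  imports Main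
begin

definition simple_graph :: "'v set \<Rightarrow> 'v set set \<Rightarrow> bool" where
  "simple_graph V E \<longleftrightarrow> finite V \<and>
     (\<forall>e\<in>E. \<exists>u w. e = {u, w} \<and> u \<noteq> w \<and> u \<in> V \<and> w \<in> V)"

definition connected_in :: "'v set set \<Rightarrow> 'v set \<Rightarrow> 'v \<Rightarrow> 'v \<Rightarrow> bool" where
  "connected_in E W u w \<longleftrightarrow>
     (\<lambda>x y. {x, y} \<in> E \<and> x \<in> W \<and> y \<in> W)\<^sup>*\<^sup>* u w"

definition degree :: "'v set set \<Rightarrow> 'v \<Rightarrow> nat" where
  "degree E v = card {e \<in> E. v \<in> e}"

(* a tree: nonempty, connected, and acyclic (no edge lies on a cycle, i.e. the
   endpoints of each edge are disconnected once that edge is removed) *)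
definition is_tree :: "'v set \<Rightarrow> 'v set set \<Rightarrow> bool" where
  "is_tree V E \<longleftrightarrow> simple_graph V E \<and> V \<noteq> {} \<and>
     (\<forall>u\<in>V. \<forall>w\<in>V. connected_in E V u w) \<and>
     (\<forall>u w. {u, w} \<in> E \<longrightarrow> \<not> connected_in (E - {{u, w}}) V u w)"

definition binary_phylo_tree :: "'a set \<Rightarrow> 'v set \<Rightarrow> 'v set set \<Rightarrow> ('a \<Rightarrow> 'v) \<Rightarrow> bool" where
  "binary_phylo_tree X V E \<phi> \<longleftrightarrow> is_tree V E \<and>
     bij_betw \<phi> X {v \<in> V. degree E v = 1} \<and>
     (\<forall>v\<in>V. degree E v = 1 \<or> degree E v = 3)"

definition interior :: "'v set \<Rightarrow> 'v set set \<Rightarrow> 'v set" where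
  "interior V E = {v \<in> V. degree E v \<noteq> 1}"

definition supports ::
  "'a set set \<Rightarrow> 'v set \<Rightarrow> 'v set set \<Rightarrow> ('a \<Rightarrow> 'v) \<Rightarrow> 'a \<Rightarrow> 'a \<Rightarrow> 'a \<Rightarrow> 'v \<Rightarrow> bool" where
  "supports \<T> V E \<phi> a b c v \<longleftrightarrow>
     \<not> connected_in E (V - {v}) (\<phi> a) (\<phi> b) \<and>
     \<not> connected_in E (V - {v}) (\<phi> a) (\<phi> c) \<and>
     \<not> connected_in E (V - {v}) (\<phi> b) (\<phi> c) \<and>
     {a, b} \<in> \<T> \<and> {a, c} \<in> \<T> \<and> {b, c} \<in> \<T>"

definition triplet_cover ::
  "'a set \<Rightarrow> 'a set set \<Rightarrow> 'v set \<Rightarrow> 'v set set \<Rightarrow> ('a \<Rightarrow> 'v) \<Rightarrow> bool" where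
  "triplet_cover X \<T> V E \<phi> \<longleftrightarrow>
     \<T> \<subseteq> {p. p \<subseteq> X \<and> card p = 2} \<and>
     (\<forall>v\<in>interior V E. \<exists>a b c. supports \<T> V E \<phi> a b c v)"

definition minimal_triplet_cover ::
  "'a set \<Rightarrow> 'a set set \<Rightarrow> 'v set \<Rightarrow> 'v set set \<Rightarrow> ('a \<Rightarrow> 'v) \<Rightarrow> bool" where
  "minimal_triplet_cover X \<T> V E \<phi> \<longleftrightarrow>
     triplet_cover X \<T> V E \<phi> \<and>
     (\<forall>p\<in>\<T>. \<not> triplet_cover X (\<T> - {p}) V E \<phi>)"

end

theory Submission
  imports Defs
begin

text \<open>
  Each interior vertex is supported by some triple, and minimality forces every pair of the
  cover to be one of the three pairs of the triple chosen for some interior vertex, so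
  the cover has at most three times as many pairs as there are interior vertices. Counting
  degrees in the binary tree, which has fewer edges than vertices, shows that there are at
  most |X| - 2 interior vertices.
\<close>

lemma connected_in_mono:
  assumes "E \<subseteq> E'" and "connected_in E W a b"
  shows "connected_in E' W a b"
  using assms(2) unfolding connected_in_def
  by (rule rtranclp_mono[THEN predicate2D, rotated]) (use assms(1) in auto)

lemma connected_in_refl: "connected_in E W a a"
  unfolding connected_in_def by simp

lemma connected_in_trans:
  "connected_in E W a b \<Longrightarrow> connected_in E W b c \<Longrightarrow> connected_in E W a c"
  unfolding connected_in_def by (rule rtranclp_trans)

lemma connected_in_sym:
  assumes "connected_in E W a b"
  shows "connected_in E W b a"
  using assms unfolding connected_in_def
proof (induction rule: rtranclp_induct)
  case (step y z)
  then have "{z, y} \<in> E \<and> z \<in> W \<and> y \<in> W" by (simp add: insert_commute)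
  from converse_rtranclp_into_rtranclp[OF this step.IH] show ?case .
qed simp

lemma connected_in_edge:
  assumes "connected_in E W a b" and "{b, c} \<in> E" and "b \<in> W" and "c \<in> W"
  shows "connected_in E W a c"
  using assms unfolding connected_in_def by (simp add: rtranclp.rtrancl_into_rtrancl)

text \<open>A path from r that uses the edge {u, w} reaches an endpoint of it first.\<close>
lemma connected_in_Diff_edge:
  assumes "connected_in E W r x"
  shows "connected_in (E - {{u, w}}) W r x \<or> connected_in (E - {{u, w}}) W r u
       \<or> connected_in (E - {{u, w}}) W r w"
  using assms unfolding connected_in_def
proof (induction rule: rtranclp_induct)
  case (step y z)
  show ?case
  proof (cases "{y, z} = {u, w}")
    case True
    then have "y = u \<or> y = w" by (auto simp: doubleton_eq_iff)
    with step.IH show ?thesis by auto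
  next
    case False
    with step.hyps(2) step.IH show ?thesis by (auto intro: rtranclp.rtrancl_into_rtrancl)
  qed
qed simp

lemma simple_graph_edgeE:
  assumes "simple_graph V E" and "e \<in> E"
  obtains u w where "e = {u, w}" and "u \<noteq> w" and "u \<in> V" and "w \<in> V"
  using assms unfolding simple_graph_def by blast

lemma simple_graph_edge_subset: "simple_graph V E \<Longrightarrow> e \<in> E \<Longrightarrow> e \<subseteq> V"
  by (auto elim: simple_graph_edgeE)

lemma simple_graph_edge_other_endpoint:
  assumes "simple_graph V E" and "e \<in> E" and "x \<in> e"
  obtains y where "{x, y} = e" and "y \<in> V"
  using assms by (elim simple_graph_edgeE) (auto simp: insert_commute)

lemma simple_graph_finite_edges:
  assumes "simple_graph V E"
  shows "finite E"
proof (rule finite_subset)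
  show "E \<subseteq> Pow V" using assms by (auto elim: simple_graph_edgeE)
  show "finite (Pow V)" using assms unfolding simple_graph_def by simp
qed

lemma sum_degree_eq_twice_card_edges:
  assumes "simple_graph V E"
  shows "(\<Sum>v\<in>V. degree E v) = 2 * card E"
proof -
  have fin: "finite V" "finite E"
    using assms simple_graph_finite_edges unfolding simple_graph_def by auto
  have "(\<Sum>v\<in>V. degree E v) = (\<Sum>v\<in>V. \<Sum>e\<in>E. if v \<in> e then 1 else 0)"
    unfolding degree_def using fin by (simp add: sum.inter_filter[symmetric])
  also have "\<dots> = (\<Sum>e\<in>E. \<Sum>v\<in>V. if v \<in> e then 1 else 0)" by (rule sum.swap)
  also have "\<dots> = (\<Sum>e\<in>E. 2)"
  proof (rule sum.cong)
    fix e assume "e \<in> E"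
    with assms obtain u w where "e = {u, w}" "u \<noteq> w" "u \<in> V" "w \<in> V"
      by (rule simple_graph_edgeE)
    then have "V \<inter> e = {u, w}" by auto
    with fin \<open>u \<noteq> w\<close> show "(\<Sum>v\<in>V. if v \<in> e then 1 else 0) = (2::nat)"
      by (simp add: sum.If_cases)
  qed simp
  finally show ?thesis by simp
qed

lemma tree_edge_separates:
  assumes "is_tree V E" and "{u, w} \<in> E"
  shows "\<not> (connected_in (E - {{u, w}}) V r u \<and> connected_in (E - {{u, w}}) V r w)"
  using assms connected_in_sym connected_in_trans unfolding is_tree_def by metis

lemma tree_other_endpoint_connected:
  assumes "is_tree V E" and "r \<in> V" and "{x, y} \<in> E"
    and "\<not> connected_in (E - {{x, y}}) V r x"
  shows "connected_in (E - {{x, y}}) V r y"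
proof -
  have "x \<in> V" using assms(1,3) simple_graph_edge_subset unfolding is_tree_def by blast
  with assms(1,2) have "connected_in E V r x" unfolding is_tree_def by blast
  with assms(4) show ?thesis using connected_in_Diff_edge[of E V r x x y] by blast
qed

text \<open>
  Rooting the tree at r, an edge is determined by its endpoint that gets separated from r
  when the edge is deleted.
\<close>
lemma tree_far_endpoint_unique:
  assumes tree: "is_tree V E" and r: "r \<in> V"
    and e1: "{x, y1} \<in> E" and e2: "{x, y2} \<in> E"
    and far1: "\<not> connected_in (E - {{x, y1}}) V r x"
    and far2: "\<not> connected_in (E - {{x, y2}}) V r x"
  shows "{x, y1} = {x, y2}"
proof (rule ccontr)
  assume ne: "{x, y1} \<noteq> {x, y2}"
  have sg: "simple_graph V E" using tree unfolding is_tree_def by simp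
  have V: "x \<in> V" "y1 \<in> V" "y2 \<in> V"
    using simple_graph_edge_subset[OF sg e1] simple_graph_edge_subset[OF sg e2] by auto
  let ?E12 = "E - {{x, y1}} - {{x, y2}}"
  have "connected_in (E - {{x, y1}}) V r y1"
    using tree_other_endpoint_connected[OF tree r e1 far1] .
  then have "connected_in ?E12 V r y1 \<or> connected_in ?E12 V r x \<or> connected_in ?E12 V r y2"
    by (rule connected_in_Diff_edge)
  moreover have "\<not> connected_in ?E12 V r y1"
  proof
    assume "connected_in ?E12 V r y1"
    then have "connected_in (E - {{x, y2}}) V r y1" by (rule connected_in_mono[rotated]) auto
    moreover have "{y1, x} \<in> E - {{x, y2}}" using e1 ne by (auto simp: insert_commute)
    ultimately have "connected_in (E - {{x, y2}}) V r x" using V by (blast intro: connected_in_edge)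
    with far2 show False by contradiction
  qed
  moreover have "\<not> connected_in ?E12 V r x"
    using far1 by (auto dest: connected_in_mono[rotated])
  moreover have "\<not> connected_in ?E12 V r y2"
  proof
    assume "connected_in ?E12 V r y2"
    then have "connected_in (E - {{x, y1}}) V r y2" by (rule connected_in_mono[rotated]) auto
    moreover have "{y2, x} \<in> E - {{x, y1}}" using e2 ne by (auto simp: insert_commute)
    ultimately have "connected_in (E - {{x, y1}}) V r x" using V by (blast intro: connected_in_edge)
    with far1 show False by contradiction
  qed
  ultimately show False by blast
qed

lemma tree_card_edges:
  assumes tree: "is_tree V E"
  shows "card E + 1 \<le> card V"
proof -
  have sg: "simple_graph V E" and finV: "finite V" and "V \<noteq> {}"
    using tree unfolding is_tree_def simple_graph_def by auto
  then obtain r where r: "r \<in> V" by blast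
  define far where "far e = (SOME x. x \<in> e \<and> \<not> connected_in (E - {e}) V r x)" for e
  have far: "far e \<in> e \<and> \<not> connected_in (E - {e}) V r (far e)" if "e \<in> E" for e
  proof -
    obtain u w where e: "e = {u, w}" using sg \<open>e \<in> E\<close> by (rule simple_graph_edgeE)
    with tree_edge_separates[OF tree, of u w r] \<open>e \<in> E\<close>
    have "\<exists>x. x \<in> e \<and> \<not> connected_in (E - {e}) V r x" by auto
    then show ?thesis unfolding far_def by (rule someI_ex)
  qed
  have "inj_on far E"
  proof (rule inj_onI)
    fix e1 e2 assume "e1 \<in> E" "e2 \<in> E" and same: "far e1 = far e2"
    obtain y1 where y1: "{far e1, y1} = e1"
      using sg \<open>e1 \<in> E\<close> conjunct1[OF far[OF \<open>e1 \<in> E\<close>]]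
      by (rule simple_graph_edge_other_endpoint)
    obtain y2 where y2: "{far e1, y2} = e2"
      using sg \<open>e2 \<in> E\<close> conjunct1[OF far[OF \<open>e2 \<in> E\<close>]] unfolding same[symmetric]
      by (rule simple_graph_edge_other_endpoint)
    have "{far e1, y1} = {far e1, y2}"
    proof (rule tree_far_endpoint_unique[OF tree r])
      show "{far e1, y1} \<in> E" "{far e1, y2} \<in> E" using \<open>e1 \<in> E\<close> \<open>e2 \<in> E\<close> y1 y2 by simp_all
      show "\<not> connected_in (E - {{far e1, y1}}) V r (far e1)"
        using far[OF \<open>e1 \<in> E\<close>] y1 by simp
      show "\<not> connected_in (E - {{far e1, y2}}) V r (far e1)"
        using far[OF \<open>e2 \<in> E\<close>] y2 same by simp
    qed
    with y1 y2 show "e1 = e2" by metis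
  qed
  moreover have "far ` E \<subseteq> V - {r}"
  proof
    fix x assume "x \<in> far ` E"
    then obtain e where "e \<in> E" "x = far e" by blast
    with far have "x \<in> e" and "\<not> connected_in (E - {e}) V r x" by auto
    moreover have "connected_in (E - {e}) V r r" by (rule connected_in_refl)
    ultimately show "x \<in> V - {r}" using simple_graph_edge_subset[OF sg \<open>e \<in> E\<close>] by auto
  qed
  ultimately have "card E \<le> card (V - {r})"
    using finV by (intro card_inj_on_le) auto
  moreover have "card V > 0" using finV \<open>V \<noteq> {}\<close> by (simp add: card_gt_0_iff)
  ultimately show ?thesis using r finV by simp
qed

lemma binary_phylo_tree_card_interior:
  assumes "binary_phylo_tree X V E \<phi>"
  shows "card (interior V E) + 2 \<le> card X"
proof -
  define L where "L = {v \<in> V. degree E v = 1}"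
  define I where "I = interior V E"
  have tree: "is_tree V E" and sg: "simple_graph V E" and finV: "finite V"
    using assms unfolding binary_phylo_tree_def is_tree_def simple_graph_def by auto
  have "card L = card X"
    using assms unfolding binary_phylo_tree_def L_def by (metis bij_betw_same_card)
  have deg_I: "degree E v = 3" if "v \<in> I" for v
    using assms that unfolding binary_phylo_tree_def I_def interior_def by auto
  have V: "V = L \<union> I" "L \<inter> I = {}" "finite L" "finite I"
    using finV unfolding L_def I_def interior_def by auto
  have "2 * card E = (\<Sum>v\<in>V. degree E v)"
    using sum_degree_eq_twice_card_edges[OF sg] by simp
  also have "\<dots> = (\<Sum>v\<in>L. degree E v) + (\<Sum>v\<in>I. degree E v)"
    using V by (simp add: sum.union_disjoint)
  also have "\<dots> = card L + 3 * card I"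
    using deg_I by (simp add: L_def)
  finally have "2 * card E = card L + 3 * card I" .
  moreover have "card V = card L + card I"
    using V by (simp add: card_Un_disjoint)
  ultimately show ?thesis
    using tree_card_edges[OF tree] \<open>card L = card X\<close> unfolding I_def by linarith
qed

text \<open>
  Deleting a pair p from a minimal cover leaves some interior vertex v unsupported, so p
  is one of the three pairs of the triple chosen for v.
\<close>
lemma minimal_triplet_cover_subset_chosen_pairs:
  assumes "minimal_triplet_cover X \<T> V E \<phi>"
    and chosen: "\<And>v. v \<in> interior V E \<Longrightarrow> supports \<T> V E \<phi> (a v) (b v) (c v) v"
  shows "\<T> \<subseteq> (\<Union>v\<in>interior V E. {{a v, b v}, {a v, c v}, {b v, c v}})"
proof
  fix p assume "p \<in> \<T>"
  with assms(1) have "\<not> triplet_cover X (\<T> - {p}) V E \<phi>" and "triplet_cover X \<T> V E \<phi>"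
    unfolding minimal_triplet_cover_def by auto
  then have "\<not> (\<forall>v\<in>interior V E. \<exists>a b c. supports (\<T> - {p}) V E \<phi> a b c v)"
    unfolding triplet_cover_def by blast
  then obtain v where v: "v \<in> interior V E"
    and unsupported: "\<And>a b c. \<not> supports (\<T> - {p}) V E \<phi> a b c v"
    by blast
  have "p \<in> {{a v, b v}, {a v, c v}, {b v, c v}}"
  proof (rule ccontr)
    assume "p \<notin> {{a v, b v}, {a v, c v}, {b v, c v}}"
    with chosen[OF v] have "supports (\<T> - {p}) V E \<phi> (a v) (b v) (c v) v"
      unfolding supports_def by auto
    with unsupported show False by blast
  qed
  with v show "p \<in> (\<Union>v\<in>interior V E. {{a v, b v}, {a v, c v}, {b v, c v}})" by blast
qed

lemma minimal_triplet_cover_card_le: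
  assumes "minimal_triplet_cover X \<T> V E \<phi>" and "finite (interior V E)"
  shows "card \<T> \<le> 3 * card (interior V E)"
proof -
  let ?I = "interior V E"
  have "\<forall>v\<in>?I. \<exists>a b c. supports \<T> V E \<phi> a b c v"
    using assms(1) unfolding minimal_triplet_cover_def triplet_cover_def by blast
  then obtain a b c where "\<And>v. v \<in> ?I \<Longrightarrow> supports \<T> V E \<phi> (a v) (b v) (c v) v"
    by metis
  with assms(1) have sub: "\<T> \<subseteq> (\<Union>v\<in>?I. {{a v, b v}, {a v, c v}, {b v, c v}})"
    by (rule minimal_triplet_cover_subset_chosen_pairs)
  have "card \<T> \<le> card (\<Union>v\<in>?I. {{a v, b v}, {a v, c v}, {b v, c v}})"
    using assms(2) by (intro card_mono[OF _ sub]) auto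
  also have "\<dots> \<le> (\<Sum>v\<in>?I. card {{a v, b v}, {a v, c v}, {b v, c v}})"
    using assms(2) by (rule card_UN_le)
  also have "\<dots> \<le> (\<Sum>v\<in>?I. 3)"
    by (intro sum_mono) (simp add: card_insert_if)
  finally show ?thesis by simp
qed

theorem corollary1:
  fixes X :: "'a set" and V :: "'v set" and E :: "'v set set"
    and \<phi> :: "'a \<Rightarrow> 'v" and \<T> :: "'a set set"
  assumes "finite X" and "card X \<ge> 3"
    and "binary_phylo_tree X V E \<phi>"
    and "minimal_triplet_cover X \<T> V E \<phi>"
  shows "card \<T> \<le> 3 * (card X - 2)"
proof -
  have "finite (interior V E)"
    using assms(3) unfolding binary_phylo_tree_def is_tree_def simple_graph_def interior_def
    by simp
  with assms(4) have "card \<T> \<le> 3 * card (interior V E)"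
    by (rule minimal_triplet_cover_card_le)
  moreover have "card (interior V E) + 2 \<le> card X"
    using assms(3) by (rule binary_phylo_tree_card_interior)
  ultimately show ?thesis by linarith
qed

end
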